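(* Let $D$ be a lower bounded distributive lattice. Then the module of motives $M(D)$ is a free abelian group.
   Context: A lower bounded distributive lattice is a distributive lattice with a bottom element $0$ (no top element required). Its module of motives $M(D)$ is the free abelian group $\mathbb{Z}[D]$ modulo the relations $[0]=0$ and $[U]+[V]=[U\vee V]+[U\wedge V]$ for all $U,V\in D$. *)

theory Defs
  imports "HOL-Algebra.Free_Abelian_Groups" "HOL-Algebra.Coset" "HOL-Algebra.Generated_Groups"
begin

text \<open>The lower bounded distributive lattice D is modelled as a type of class
  distrib_lattice + order_bot (carrier = the whole type, 0 = bot).\<close>

definition motive_relations :: "('a::{distrib_lattice,order_bot} \<Rightarrow>\<^sub>0 int) set" where
  "motive_relations =
     {frag_of bot} \<union>
     {frag_of U + frag_of V - frag_of (sup U V) - frag_of (inf U V) | U V. True}"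

definition module_of_motives ::
  "('a::{distrib_lattice,order_bot} \<Rightarrow>\<^sub>0 int) set monoid" where
  "module_of_motives =
     free_Abelian_group (UNIV::'a set) Mod
       generate (free_Abelian_group (UNIV::'a set)) motive_relations"

definition free_abelian :: "('b, 'c) monoid_scheme \<Rightarrow> bool" where
  "free_abelian G \<longleftrightarrow> comm_group G \<and> (\<exists>B \<subseteq> carrier G. G \<cong> free_Abelian_group B)"

end

theory Submission
  imports Defs "HOL-Library.Multiset_Order"
begin

text \<open>
  The argument is Noebeling's proof that groups of integer-valued continuous functions are
  free. Fix a well-order on \<open>D\<close> and compare finite sets colexicographically. Call a finite
  nonempty \<open>T \<subseteq> D\<close> basic if \<open>[\<Sqinter>T]\<close> is not congruent, modulo the relations, to an integer
  combination of meets of colex-smaller sets. By well-founded induction the classes of basic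
  meets span \<open>M(D)\<close>.

  For independence, evaluate at prime filters: an element of \<open>\<int>[D]\<close> vanishing at every
  prime filter is a consequence of the relations (induction on its support, using the prime
  filter theorem), and on any family of sets the integer combinations of indicators
  \<open>[T \<subseteq> S]\<close> of colex-smaller sets form a pure subgroup. Hence a dependency
  \<open>n [\<Sqinter>U] \<equiv> \<Sum> c\<^sub>T [\<Sqinter>T]\<close> among basic meets, with \<open>U\<close> colex-greatest, can be divided
  by \<open>n\<close>, contradicting that \<open>U\<close> is basic.
\<close>

typedef 'a wellordered = "UNIV :: 'a set" ..

definition some_well_order :: "'a rel" where
  "some_well_order = (SOME r. well_order_on UNIV r)"

lemma well_order_some_well_order: "well_order_on UNIV some_well_order"
  unfolding some_well_order_def by (rule someI_ex[OF well_order_on])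

instantiation wellordered :: (type) wellorder
begin

definition less_eq_wellordered :: "'a wellordered \<Rightarrow> 'a wellordered \<Rightarrow> bool" where
  "x \<le> y \<longleftrightarrow> (Rep_wellordered x, Rep_wellordered y) \<in> some_well_order"

definition less_wellordered :: "'a wellordered \<Rightarrow> 'a wellordered \<Rightarrow> bool" where
  "x < y \<longleftrightarrow> (Rep_wellordered x, Rep_wellordered y) \<in> some_well_order - Id"

instance
proof
  have "linear_order_on UNIV (some_well_order :: 'a rel)"
    using well_order_some_well_order unfolding well_order_on_def by auto
  then have refl: "refl_on UNIV (some_well_order :: 'a rel)" and trans: "trans (some_well_order :: 'a rel)"
    and antisym: "antisym (some_well_order :: 'a rel)" and total: "total_on UNIV (some_well_order :: 'a rel)"
    unfolding linear_order_on_def partial_order_on_def preorder_on_def by auto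
  fix x y z :: "'a wellordered"
  show "x \<le> x"
    using refl unfolding less_eq_wellordered_def refl_on_def by auto
  show "x \<le> y \<Longrightarrow> y \<le> z \<Longrightarrow> x \<le> z"
    using trans unfolding less_eq_wellordered_def by (meson transD)
  show "x \<le> y \<Longrightarrow> y \<le> x \<Longrightarrow> x = y"
    using antisym unfolding less_eq_wellordered_def by (meson antisymD Rep_wellordered_inject)
  show "x < y \<longleftrightarrow> x \<le> y \<and> \<not> y \<le> x"
    using antisym unfolding less_eq_wellordered_def less_wellordered_def
    by (auto dest: antisymD simp: Rep_wellordered_inject)
  show "x \<le> y \<or> y \<le> x"
    using total refl unfolding less_eq_wellordered_def total_on_def refl_on_def
    by (cases "x = y") (auto simp: Rep_wellordered_inject)
next
  fix P :: "'a wellordered \<Rightarrow> bool" and a :: "'a wellordered"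
  assume step: "\<And>x. (\<And>y. y < x \<Longrightarrow> P y) \<Longrightarrow> P x"
  have "wf (inv_image ((some_well_order :: 'a rel) - Id) Rep_wellordered)"
    using well_order_some_well_order unfolding well_order_on_def by auto
  then show "P a"
    by (induction a rule: wf_induct_rule) (rule step, simp add: less_wellordered_def)
qed

end

section \<open>Colexicographic order and subset indicators\<close>

text \<open>For finite sets: the greatest element of the symmetric difference lies in the larger set.\<close>

definition colex_less :: "'b::linorder set \<Rightarrow> 'b set \<Rightarrow> bool" where
  "colex_less T U \<longleftrightarrow> mset_set T < mset_set U"

definition colex_below :: "'b::linorder set \<Rightarrow> 'b set \<Rightarrow> 'b set set" where
  "colex_below J U = {T. T \<subseteq> J \<and> colex_less T U}"

lemma colex_less_irrefl: "\<not> colex_less T T"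
  by (simp add: colex_less_def)

lemma colex_less_insert_greater:
  assumes "finite T" "finite U" "\<forall>t\<in>T. t < k" "\<forall>u\<in>U. u < k"
  shows "colex_less T (insert k U)"
  unfolding colex_less_def
proof (rule ex_gt_count_imp_le_multiset[where x = k])
  show "\<forall>y. y \<in># mset_set T + mset_set (insert k U) \<longrightarrow> y \<le> k"
    using assms by (auto simp: less_imp_le)
  show "count (mset_set T) k < count (mset_set (insert k U)) k"
    using assms by auto
qed

lemma colex_less_insert_insert:
  "finite T \<Longrightarrow> finite U \<Longrightarrow> k \<notin> T \<Longrightarrow> k \<notin> U \<Longrightarrow>
    colex_less (insert k T) (insert k U) \<longleftrightarrow> colex_less T U"
  by (simp add: colex_less_def)

lemma finite_colex_below: "finite J \<Longrightarrow> finite (colex_below J U)"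
  unfolding colex_below_def by simp

lemma wf_colex_less: "wf {(S, T :: 'b::wellorder set). colex_less S T}"
  using wf_inv_image[OF wf_less_multiset, of mset_set] unfolding colex_less_def inv_image_def by simp

lemma colex_greatest:
  fixes K :: "'b::linorder set set"
  assumes "finite K" "K \<noteq> {}" "\<And>T. T \<in> K \<Longrightarrow> finite T"
  obtains U where "U \<in> K" "\<And>S. S \<in> K \<Longrightarrow> S \<noteq> U \<Longrightarrow> colex_less S U"
proof -
  have "Max (mset_set ` K) \<in> mset_set ` K"
    using assms(1,2) by (intro Max_in) auto
  then obtain U where U: "U \<in> K" "mset_set U = Max (mset_set ` K)"
    by auto
  have "colex_less S U" if "S \<in> K" "S \<noteq> U" for S
  proof -
    have "mset_set S \<le> mset_set U"
      using U(2) assms(1) that(1) by simp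
    moreover have "mset_set S \<noteq> mset_set U"
      using assms(3) U(1) that by simp
    ultimately show ?thesis
      unfolding colex_less_def by simp
  qed
  with U(1) that show ?thesis
    by blast
qed

lemma colex_below_insert_greater_unchanged:
  assumes "finite J" "\<forall>j\<in>J. j < k" "U \<subseteq> J"
  shows "colex_below (insert k J) U = colex_below J U"
proof -
  have "colex_less U T" if "T \<subseteq> insert k J" "k \<in> T" for T
  proof -
    have "colex_less U (insert k (T - {k}))"
      using assms that by (intro colex_less_insert_greater) (auto intro: finite_subset)
    then show ?thesis
      using that(2) by (simp add: insert_absorb)
  qed
  then have "\<not> colex_less T U" if "T \<subseteq> insert k J" "k \<in> T" for T
    using that unfolding colex_less_def by (meson less_asym)
  then show ?thesis
    unfolding colex_below_def by blast
qed

lemma colex_below_insert_greater: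
  assumes "finite J" "\<forall>j\<in>J. j < k" "U \<subseteq> J"
  shows "colex_below (insert k J) (insert k U) = Pow J \<union> insert k ` colex_below J U"
proof (intro equalityI subsetI)
  fix T
  assume T: "T \<in> colex_below (insert k J) (insert k U)"
  show "T \<in> Pow J \<union> insert k ` colex_below J U"
  proof (cases "k \<in> T")
    case True
    then have "colex_less (T - {k}) U"
      using T assms colex_less_insert_insert[of "T - {k}" U k]
      by (auto simp: colex_below_def insert_absorb intro: finite_subset)
    then have "T - {k} \<in> colex_below J U"
      using T unfolding colex_below_def by auto
    then show ?thesis
      using True by (metis UnI2 image_eqI insert_Diff)
  next
    case False
    then show ?thesis
      using T unfolding colex_below_def by auto
  qed
next
  fix T
  assume T: "T \<in> Pow J \<union> insert k ` colex_below J U"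
  have fin: "finite S" if "S \<subseteq> J" for S
    using that assms(1) by (rule finite_subset)
  have "k \<notin> J" "k \<notin> U"
    using assms by auto
  from T consider "T \<subseteq> J" | T' where "T = insert k T'" "T' \<subseteq> J" "colex_less T' U"
    unfolding colex_below_def by auto
  then show "T \<in> colex_below (insert k J) (insert k U)"
  proof cases
    case 1
    then have "colex_less T (insert k U)"
      using assms fin by (intro colex_less_insert_greater) auto
    with 1 show ?thesis
      unfolding colex_below_def by auto
  next
    case 2
    then have "colex_less T (insert k U)"
      using assms(3) fin \<open>k \<notin> J\<close> \<open>k \<notin> U\<close> colex_less_insert_insert[of T' U k] by auto
    with 2 show ?thesis
      unfolding colex_below_def by auto
  qed
qed

lemma sum_colex_below_insert_greater:
  assumes "finite J" "\<forall>j\<in>J. j < k" "U \<subseteq> J"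
  shows "(\<Sum>T\<in>colex_below (insert k J) (insert k U). F T)
       = (\<Sum>T\<in>Pow J. F T) + (\<Sum>T\<in>colex_below J U. F (insert k T))"
proof -
  have kJ: "k \<notin> T" if "T \<subseteq> J" for T
    using that assms(2) by auto
  have inj: "inj_on (insert k) (colex_below J U)"
    using kJ unfolding inj_on_def colex_below_def by (metis Diff_insert_absorb mem_Collect_eq)
  have "(\<Sum>T\<in>colex_below (insert k J) (insert k U). F T)
      = (\<Sum>T\<in>Pow J. F T) + (\<Sum>T\<in>insert k ` colex_below J U. F T)"
    unfolding colex_below_insert_greater[OF assms]
    by (rule sum.union_disjoint) (use assms kJ in \<open>auto simp: finite_colex_below\<close>)
  also have "(\<Sum>T\<in>insert k ` colex_below J U. F T) = (\<Sum>T\<in>colex_below J U. F (insert k T))"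
    by (simp add: sum.reindex[OF inj])
  finally show ?thesis .
qed

definition subset_ind :: "'b set \<Rightarrow> 'b set \<Rightarrow> int" where
  "subset_ind T S = (if T \<subseteq> S then 1 else 0)"

lemma subset_ind_insert_mem: "k \<in> S \<Longrightarrow> subset_ind (insert k T) S = subset_ind T S"
  by (simp add: subset_ind_def)

lemma subset_ind_insert_nonmem: "k \<notin> S \<Longrightarrow> subset_ind (insert k T) S = 0"
  by (simp add: subset_ind_def)

lemma subset_ind_Diff_singleton: "k \<notin> T \<Longrightarrow> subset_ind T (S - {k}) = subset_ind T S"
  by (auto simp: subset_ind_def)

lemma sum_Pow_insert:
  assumes "finite A" "k \<notin> A"
  shows "(\<Sum>T\<in>Pow (insert k A). F T) = (\<Sum>T\<in>Pow A. F T) + (\<Sum>T\<in>Pow A. F (insert k T))"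
proof -
  have "inj_on (insert k) (Pow A)"
    using assms(2) unfolding inj_on_def by (metis PowD Diff_insert_absorb subsetD)
  moreover have "Pow A \<inter> insert k ` Pow A = {}"
    using assms(2) by auto
  ultimately show ?thesis
    using assms(1) by (simp add: Pow_insert sum.union_disjoint sum.reindex)
qed

lemma sum_Pow_insert_subset_ind_nonmem:
  assumes "finite A" "k \<notin> A" "k \<notin> G"
  shows "(\<Sum>T\<in>Pow (insert k A). w T * subset_ind T G) = (\<Sum>T\<in>Pow A. w T * subset_ind T G)"
  using assms by (simp add: sum_Pow_insert subset_ind_insert_nonmem)

lemma sum_Pow_insert_subset_ind_mem:
  assumes "finite A" "k \<notin> A" "k \<in> G"
  shows "(\<Sum>T\<in>Pow (insert k A). w T * subset_ind T G)
       = (\<Sum>T\<in>Pow A. (w T + w (insert k T)) * subset_ind T G)"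
  using assms by (simp add: sum_Pow_insert subset_ind_insert_mem sum.distrib distrib_right)

lemma sum_Pow_singletons:
  assumes "finite A" "\<And>T. T \<subseteq> A \<Longrightarrow> \<not> is_singleton T \<Longrightarrow> F T = 0"
  shows "(\<Sum>T\<in>Pow A. F T) = (\<Sum>a\<in>A. F {a})"
proof -
  have "(\<Sum>T\<in>Pow A. F T) = (\<Sum>T\<in>(\<lambda>a. {a}) ` A. F T)"
    using assms by (intro sum.mono_neutral_right) (auto simp: is_singleton_def)
  also have "\<dots> = (\<Sum>a\<in>A. F {a})"
    by (simp add: sum.reindex)
  finally show ?thesis .
qed

lemma sum_subset_ind_remove_empty:
  assumes "finite B"
  shows "(\<Sum>T\<in>B. h T * subset_ind T S)
       = (\<Sum>T\<in>B - {{}}. h T * subset_ind T S) + (\<Sum>T\<in>B. h T * subset_ind T {})"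
proof (cases "{} \<in> B")
  case True
  have "(\<Sum>T\<in>B - {{}}. h T * subset_ind T {}) = 0"
    by (rule sum.neutral) (auto simp: subset_ind_def)
  with True assms show ?thesis
    by (simp add: sum.remove subset_ind_def)
next
  case False
  have "(\<Sum>T\<in>B. h T * subset_ind T {}) = 0"
    using False by (intro sum.neutral) (auto simp: subset_ind_def)
  with False show ?thesis
    by simp
qed

lemma sum_colex_below_insert_greater_subset_ind:
  assumes "finite J" "\<forall>j\<in>J. j < k" "U \<subseteq> J"
  shows "(\<Sum>T\<in>colex_below (insert k J) (insert k U). c T * subset_ind T S)
       = (\<Sum>T\<in>Pow J. c T * subset_ind T (S - {k}))
         + (if k \<in> S then \<Sum>T\<in>colex_below J U. c (insert k T) * subset_ind T (S - {k}) else 0)"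
proof -
  have kJ: "k \<notin> T" if "T \<subseteq> J" for T
    using that assms(2) by auto
  have "(\<Sum>T\<in>Pow J. c T * subset_ind T S) = (\<Sum>T\<in>Pow J. c T * subset_ind T (S - {k}))"
    using kJ by (intro sum.cong refl) (simp add: subset_ind_Diff_singleton)
  moreover have "(\<Sum>T\<in>colex_below J U. c (insert k T) * subset_ind (insert k T) S)
      = (\<Sum>T\<in>colex_below J U. c (insert k T) * subset_ind T (S - {k}))" if "k \<in> S"
    using kJ that unfolding colex_below_def
    by (intro sum.cong refl) (simp add: subset_ind_Diff_singleton subset_ind_insert_mem)
  ultimately show ?thesis
    by (simp add: sum_colex_below_insert_greater[OF assms] subset_ind_insert_nonmem)
qed

lemma sum_colex_below_subset_ind_Diff_greater:
  assumes "\<forall>j\<in>J. j < k"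
  shows "(\<Sum>T\<in>colex_below J U. d T * subset_ind T (S - {k}))
       = (\<Sum>T\<in>colex_below J U. d T * subset_ind T S)"
proof (intro sum.cong refl)
  fix T
  assume "T \<in> colex_below J U"
  then have "k \<notin> T"
    using assms unfolding colex_below_def by auto
  then show "d T * subset_ind T (S - {k}) = d T * subset_ind T S"
    by (simp add: subset_ind_Diff_singleton)
qed

lemma subset_ind_span:
  assumes "finite J"
  shows "\<exists>a. \<forall>S\<subseteq>J. h S = (\<Sum>T\<in>Pow J. a T * subset_ind T S)"
  using assms
proof (induction J arbitrary: h rule: finite_induct)
  case empty
  show ?case by (rule exI[of _ "\<lambda>_. h {}"]) (simp add: subset_ind_def)
next
  case (insert k J)
  obtain a0 where a0: "\<And>S. S \<subseteq> J \<Longrightarrow> h S = (\<Sum>T\<in>Pow J. a0 T * subset_ind T S)"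
    using insert.IH by blast
  obtain a1 where a1: "\<And>S. S \<subseteq> J \<Longrightarrow> h (insert k S) - h S = (\<Sum>T\<in>Pow J. a1 T * subset_ind T S)"
    using insert.IH[of "\<lambda>S. h (insert k S) - h S"] by blast
  define a where "a T = (if k \<in> T then a1 (T - {k}) else a0 T)" for T
  have "h S = (\<Sum>T\<in>Pow (insert k J). a T * subset_ind T S)" if S: "S \<subseteq> insert k J" for S
  proof -
    have kT: "k \<notin> T" if "T \<in> Pow J" for T
      using that insert.hyps(2) by auto
    have S': "S - {k} \<subseteq> J"
      using S by auto
    have "(\<Sum>T\<in>Pow (insert k J). a T * subset_ind T S)
        = (\<Sum>T\<in>Pow J. a0 T * subset_ind T (S - {k}))
          + (if k \<in> S then \<Sum>T\<in>Pow J. a1 T * subset_ind T (S - {k}) else 0)"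
      using insert.hyps kT
      by (simp add: sum_Pow_insert a_def subset_ind_Diff_singleton subset_ind_insert_mem
          subset_ind_insert_nonmem insert_Diff_if)
    also have "\<dots> = h S"
      using a0[OF S'] a1[OF S'] by (cases "k \<in> S") (simp_all add: insert_absorb)
    finally show ?thesis ..
  qed
  then show ?case by blast
qed

section \<open>Purity of spans of colex-smaller subset indicators\<close>

definition spanned_below :: "'b::linorder set \<Rightarrow> 'b set \<Rightarrow> 'b set set \<Rightarrow> ('b set \<Rightarrow> int) \<Rightarrow> bool"
  where "spanned_below J U X f \<longleftrightarrow>
    (\<exists>c. \<forall>S\<in>X. f S = (\<Sum>T\<in>colex_below J U. c T * subset_ind T S))"

lemma spanned_below_pure_step_nonmem:
  fixes n :: int
  assumes J: "finite J" "\<forall>j\<in>J. j < k" and U: "U \<subseteq> J" and n: "n \<noteq> 0"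
    and IH: "\<And>X f. X \<subseteq> Pow J \<Longrightarrow> spanned_below J U X (\<lambda>S. n * f S) \<Longrightarrow> spanned_below J U X f"
    and X: "X \<subseteq> Pow (insert k J)" and nf: "spanned_below (insert k J) U X (\<lambda>S. n * f S)"
  shows "spanned_below (insert k J) U X f"
proof -
  note below_eq = colex_below_insert_greater_unchanged[OF J U]
  note Diff_k = sum_colex_below_subset_ind_Diff_greater[OF J(2)]
  obtain c where c: "\<And>S. S \<in> X \<Longrightarrow> n * f S = (\<Sum>T\<in>colex_below J U. c T * subset_ind T S)"
    using nf unfolding spanned_below_def below_eq by blast
  define f' where "f' S = (\<Sum>T\<in>colex_below J U. c T * subset_ind T S) div n" for S
  have f: "f S = f' (S - {k})" if "S \<in> X" for S
  proof -
    have "f' (S - {k}) = (n * f S) div n"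
      unfolding f'_def c[OF that] Diff_k ..
    then show ?thesis
      using n by simp
  qed
  define X' where "X' = (\<lambda>S. S - {k}) ` X"
  have X': "X' \<subseteq> Pow J"
    using X unfolding X'_def by auto
  have "n * f' (S - {k}) = (\<Sum>T\<in>colex_below J U. c T * subset_ind T (S - {k}))" if "S \<in> X" for S
    using c[OF that] f[OF that] by (simp add: Diff_k)
  then have "spanned_below J U X' (\<lambda>S. n * f' S)"
    unfolding spanned_below_def X'_def by (intro exI[of _ c]) simp
  with X' have "spanned_below J U X' f'"
    by (rule IH)
  then obtain c' where c': "\<And>S. S \<in> X' \<Longrightarrow> f' S = (\<Sum>T\<in>colex_below J U. c' T * subset_ind T S)"
    unfolding spanned_below_def by blast
  have "f S = (\<Sum>T\<in>colex_below J U. c' T * subset_ind T S)" if "S \<in> X" for S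
  proof -
    have "S - {k} \<in> X'"
      using that unfolding X'_def by blast
    then show ?thesis
      using f[OF that] c' by (simp add: Diff_k)
  qed
  then show ?thesis
    unfolding spanned_below_def below_eq by (intro exI[of _ c']) blast
qed

lemma spanned_below_insert_greater_diff:
  assumes J: "finite J" "\<forall>j\<in>J. j < k" and U: "U \<subseteq> J"
    and h: "spanned_below (insert k J) (insert k U) X h"
  shows "spanned_below J U {S \<in> X. k \<notin> S \<and> insert k S \<in> X} (\<lambda>S. h (insert k S) - h S)"
proof -
  note split = sum_colex_below_insert_greater_subset_ind[OF J U]
  obtain c where c: "\<And>S. S \<in> X \<Longrightarrow>
      h S = (\<Sum>T\<in>colex_below (insert k J) (insert k U). c T * subset_ind T S)"
    using h unfolding spanned_below_def by blast
  have "h (insert k S) - h S = (\<Sum>T\<in>colex_below J U. c (insert k T) * subset_ind T S)"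
    if "S \<in> X" "k \<notin> S" "insert k S \<in> X" for S
  proof -
    have "S - {k} = S" "insert k S - {k} = S"
      using that(2) by auto
    then show ?thesis
      using c[OF that(1)] c[OF that(3)] split[of c S] split[of c "insert k S"] that(2) by simp
  qed
  then show ?thesis
    unfolding spanned_below_def by (intro exI[of _ "\<lambda>T. c (insert k T)"]) blast
qed

lemma spanned_below_insert_greater_if_diff:
  assumes J: "finite J" "\<forall>j\<in>J. j < k" and U: "U \<subseteq> J" and X: "X \<subseteq> Pow (insert k J)"
    and diff: "spanned_below J U {S \<in> X. k \<notin> S \<and> insert k S \<in> X} (\<lambda>S. f (insert k S) - f S)"
  shows "spanned_below (insert k J) (insert k U) X f"
proof -
  obtain b where b: "\<And>S. S \<in> X \<Longrightarrow> k \<notin> S \<Longrightarrow> insert k S \<in> X \<Longrightarrow>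
      f (insert k S) - f S = (\<Sum>T\<in>colex_below J U. b T * subset_ind T S)"
    using diff unfolding spanned_below_def by blast
  define B where "B S = (\<Sum>T\<in>colex_below J U. b T * subset_ind T S)" for S
  obtain a where a: "\<And>S. S \<subseteq> J \<Longrightarrow>
      (if S \<in> X then f S else f (insert k S) - B S) = (\<Sum>T\<in>Pow J. a T * subset_ind T S)"
    using subset_ind_span[OF J(1), of "\<lambda>S. if S \<in> X then f S else f (insert k S) - B S"]
    by blast
  define c where "c T = (if k \<in> T then b (T - {k}) else a T)" for T
  have c_Pow: "c T = a T" and c_insert: "c (insert k T) = b T" if "T \<subseteq> J" for T
  proof -
    have "k \<notin> T"
      using that J(2) by auto
    then show "c T = a T" "c (insert k T) = b T"
      by (simp_all add: c_def Diff_insert_absorb)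
  qed
  have "f S = (\<Sum>T\<in>colex_below (insert k J) (insert k U). c T * subset_ind T S)" if S: "S \<in> X" for S
  proof -
    have "(\<Sum>T\<in>colex_below (insert k J) (insert k U). c T * subset_ind T S)
        = (\<Sum>T\<in>Pow J. a T * subset_ind T (S - {k})) + (if k \<in> S then B (S - {k}) else 0)"
      unfolding sum_colex_below_insert_greater_subset_ind[OF J U] B_def
      by (simp add: c_Pow c_insert colex_below_def)
    also have "\<dots> = f S"
    proof (cases "k \<in> S")
      case True
      define S' where "S' = S - {k}"
      have S': "S' \<subseteq> J" "insert k S' = S" "k \<notin> S'"
        using X S True unfolding S'_def by auto
      show ?thesis
      proof (cases "S' \<in> X")
        case True
        then show ?thesis
          using a[OF S'(1)] b[of S'] S S' \<open>k \<in> S\<close> unfolding S'_def B_def by simp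
      next
        case False
        then show ?thesis
          using a[OF S'(1)] S'(2) \<open>k \<in> S\<close> unfolding S'_def by simp
      qed
    next
      case False
      then have "S \<subseteq> J" "S - {k} = S"
        using X S by auto
      then show ?thesis
        using a[of S] S False by simp
    qed
    finally show ?thesis ..
  qed
  then show ?thesis
    unfolding spanned_below_def by (intro exI[of _ c]) blast
qed

lemma spanned_below_pure_step_mem:
  fixes n :: int
  assumes J: "finite J" "\<forall>j\<in>J. j < k" and U: "U \<subseteq> J"
    and IH: "\<And>X f. X \<subseteq> Pow J \<Longrightarrow> spanned_below J U X (\<lambda>S. n * f S) \<Longrightarrow> spanned_below J U X f"
    and X: "X \<subseteq> Pow (insert k J)" and nf: "spanned_below (insert k J) (insert k U) X (\<lambda>S. n * f S)"
  shows "spanned_below (insert k J) (insert k U) X f"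
proof -
  define C where "C = {S \<in> X. k \<notin> S \<and> insert k S \<in> X}"
  have C: "C \<subseteq> Pow J"
    using X unfolding C_def by auto
  have "spanned_below J U C (\<lambda>S. n * (f (insert k S) - f S))"
    using spanned_below_insert_greater_diff[OF J U nf] unfolding C_def
    by (simp add: right_diff_distrib)
  with C have "spanned_below J U C (\<lambda>S. f (insert k S) - f S)"
    by (rule IH)
  then show ?thesis
    using spanned_below_insert_greater_if_diff[OF J U X] unfolding C_def by blast
qed

lemma spanned_below_pure:
  fixes n :: int
  assumes "finite J" "U \<subseteq> J" "X \<subseteq> Pow J" "n \<noteq> 0" "spanned_below J U X (\<lambda>S. n * f S)"
  shows "spanned_below J U X f"
  using assms(1-3,5)
proof (induction J arbitrary: U X f rule: finite_linorder_max_induct)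
  case empty
  then have "colex_below {} U = {}"
    unfolding colex_below_def by (auto simp: colex_less_irrefl)
  with empty.prems(3) assms(4) show ?case
    unfolding spanned_below_def by simp
next
  case (insert k J)
  show ?case
  proof (cases "k \<in> U")
    case True
    define U' where "U' = U - {k}"
    have U: "U = insert k U'" "U' \<subseteq> J"
      using True insert.prems(1) unfolding U'_def by auto
    show ?thesis
      using insert.prems(2,3) spanned_below_pure_step_mem[OF insert.hyps(1,2) U(2) insert.IH[OF U(2)]]
      unfolding U(1) by blast
  next
    case False
    then have U: "U \<subseteq> J"
      using insert.prems(1) by auto
    show ?thesis
      using insert.hyps(1,2) U assms(4) insert.IH[OF U] insert.prems(2,3)
      by (rule spanned_below_pure_step_nonmem)
  qed
qed

section \<open>Prime filters\<close>

definition lattice_filter :: "'a::lattice set \<Rightarrow> bool" where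
  "lattice_filter F \<longleftrightarrow> (\<forall>x\<in>F. \<forall>y. x \<le> y \<longrightarrow> y \<in> F) \<and> (\<forall>x\<in>F. \<forall>y\<in>F. inf x y \<in> F)"

definition prime_filter :: "'a::{distrib_lattice,order_bot} set \<Rightarrow> bool" where
  "prime_filter G \<longleftrightarrow> lattice_filter G \<and> bot \<notin> G \<and> (\<forall>x y. sup x y \<in> G \<longrightarrow> x \<in> G \<or> y \<in> G)"

lemma prime_filter_bot: "prime_filter G \<Longrightarrow> bot \<notin> G"
  unfolding prime_filter_def by blast

lemma prime_filter_inf_iff: "prime_filter G \<Longrightarrow> inf x y \<in> G \<longleftrightarrow> x \<in> G \<and> y \<in> G"
  unfolding prime_filter_def lattice_filter_def by (meson inf.cobounded1 inf.cobounded2)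

lemma prime_filter_sup_iff: "prime_filter G \<Longrightarrow> sup x y \<in> G \<longleftrightarrow> x \<in> G \<or> y \<in> G"
  unfolding prime_filter_def lattice_filter_def by (meson sup.cobounded1 sup.cobounded2)

lemma prime_filter_Inf_fin_iff:
  assumes "prime_filter G" "finite A" "A \<noteq> {}"
  shows "Inf_fin A \<in> G \<longleftrightarrow> A \<subseteq> G"
  using assms(2,3) by (induction A rule: finite_ne_induct) (simp_all add: prime_filter_inf_iff[OF assms(1)])

lemma lattice_filter_Union_chain:
  assumes "\<And>F. F \<in> C \<Longrightarrow> lattice_filter F" "\<And>F F'. F \<in> C \<Longrightarrow> F' \<in> C \<Longrightarrow> F \<subseteq> F' \<or> F' \<subseteq> F"
  shows "lattice_filter (\<Union>C)"
  unfolding lattice_filter_def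
proof (intro conjI ballI allI impI)
  fix x y
  assume "x \<in> \<Union>C" "x \<le> y"
  then show "y \<in> \<Union>C"
    using assms(1) unfolding lattice_filter_def by blast
next
  fix x y
  assume "x \<in> \<Union>C" "y \<in> \<Union>C"
  then obtain F F' where "F \<in> C" "F' \<in> C" "x \<in> F" "y \<in> F'"
    by blast
  moreover from this have "x \<in> F \<and> y \<in> F \<or> x \<in> F' \<and> y \<in> F'"
    using assms(2) by blast
  ultimately show "inf x y \<in> \<Union>C"
    using assms(1) unfolding lattice_filter_def by blast
qed

lemma lattice_filter_adjoin:
  assumes "lattice_filter F"
  shows "lattice_filter {z. \<exists>f\<in>F. inf f x \<le> z}"
  unfolding lattice_filter_def
proof (intro conjI ballI allI impI)
  fix z y
  assume "z \<in> {z. \<exists>f\<in>F. inf f x \<le> z}" "z \<le> y"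
  then show "y \<in> {z. \<exists>f\<in>F. inf f x \<le> z}"
    using order.trans by blast
next
  fix z y
  assume "z \<in> {z. \<exists>f\<in>F. inf f x \<le> z}" "y \<in> {z. \<exists>f\<in>F. inf f x \<le> z}"
  then obtain f1 f2 where "f1 \<in> F" "inf f1 x \<le> z" "f2 \<in> F" "inf f2 x \<le> y"
    by blast
  have "inf (inf f1 f2) x \<le> inf f1 x" "inf (inf f1 f2) x \<le> inf f2 x"
    by (simp_all add: inf.coboundedI1 le_infI1 le_infI2)
  then have "inf (inf f1 f2) x \<le> inf z y"
    using \<open>inf f1 x \<le> z\<close> \<open>inf f2 x \<le> y\<close> by (meson le_inf_iff order.trans)
  moreover have "inf f1 f2 \<in> F"
    using assms \<open>f1 \<in> F\<close> \<open>f2 \<in> F\<close> unfolding lattice_filter_def by blast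
  ultimately show "inf z y \<in> {z. \<exists>f\<in>F. inf f x \<le> z}"
    by blast
qed

lemma prime_filter_if_maximal:
  fixes a b :: "'a::{distrib_lattice,order_bot}"
  assumes M: "lattice_filter M" "a \<in> M" "b \<notin> M"
    and maximal: "\<And>F. lattice_filter F \<Longrightarrow> a \<in> F \<Longrightarrow> b \<notin> F \<Longrightarrow> M \<subseteq> F \<Longrightarrow> F = M"
  shows "prime_filter M"
proof -
  have up: "y \<in> M" if "x \<in> M" "x \<le> y" for x y
    using M(1) that unfolding lattice_filter_def by blast
  have inf: "inf x y \<in> M" if "x \<in> M" "y \<in> M" for x y
    using M(1) that unfolding lattice_filter_def by blast
  have escape: "\<exists>f\<in>M. inf f x \<le> b" if "x \<notin> M" for x
  proof (rule ccontr)
    define M' where "M' = {z. \<exists>f\<in>M. inf f x \<le> z}"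
    assume "\<not> (\<exists>f\<in>M. inf f x \<le> b)"
    then have "b \<notin> M'"
      unfolding M'_def by blast
    moreover have "M \<subseteq> M'" "x \<in> M'"
      using M(2) unfolding M'_def by (auto intro: le_infI1)
    ultimately show False
      using maximal[OF lattice_filter_adjoin[OF M(1)]] M(2) that unfolding M'_def by blast
  qed
  show ?thesis
    unfolding prime_filter_def
  proof (intro conjI allI impI M(1))
    show "bot \<notin> M"
      using up[of bot b] M(3) by auto
  next
    fix x y
    assume xy: "sup x y \<in> M"
    show "x \<in> M \<or> y \<in> M"
    proof (rule ccontr)
      assume "\<not> (x \<in> M \<or> y \<in> M)"
      then obtain f1 f2 where f: "f1 \<in> M" "inf f1 x \<le> b" "f2 \<in> M" "inf f2 y \<le> b"
        using escape by blast
      have "inf (inf f1 f2) (sup x y) = sup (inf (inf f1 f2) x) (inf (inf f1 f2) y)"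
        by (rule inf_sup_distrib1)
      also have "\<dots> \<le> b"
        using f by (metis inf.coboundedI1 inf.coboundedI2 inf_commute inf_left_commute le_supI)
      finally show False
        using up inf f xy M(3) by blast
    qed
  qed
qed

lemma prime_filter_separates:
  fixes a b :: "'a::{distrib_lattice,order_bot}"
  assumes "\<not> a \<le> b"
  obtains G where "prime_filter G" "a \<in> G" "b \<notin> G"
proof -
  define \<A> where "\<A> = {F. lattice_filter F \<and> a \<in> F \<and> b \<notin> F}"
  have "{x. a \<le> x} \<in> \<A>"
    using assms unfolding \<A>_def lattice_filter_def by auto
  then have nonempty: "\<A> \<noteq> {}"
    by blast
  have chain: "\<Union>\<C> \<in> \<A>" if "\<C> \<noteq> {}" "subset.chain \<A> \<C>" for \<C>
  proof -
    have "lattice_filter (\<Union>\<C>)"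
      using that(2) unfolding \<A>_def subset_chain_def
      by (intro lattice_filter_Union_chain) auto
    then show ?thesis
      using that unfolding \<A>_def subset_chain_def by auto
  qed
  obtain M where "M \<in> \<A>" and maximal: "\<And>F. F \<in> \<A> \<Longrightarrow> M \<subseteq> F \<Longrightarrow> F = M"
    using subset_Zorn_nonempty[OF nonempty chain] by blast
  then have "lattice_filter M" "a \<in> M" "b \<notin> M"
    unfolding \<A>_def by auto
  moreover from this have "prime_filter M"
    using maximal unfolding \<A>_def by (intro prime_filter_if_maximal) auto
  ultimately show ?thesis
    using that by blast
qed

section \<open>The relations and evaluation at prime filters\<close>

definition motive_kernel :: "('a::{distrib_lattice,order_bot} \<Rightarrow>\<^sub>0 int) set" where
  "motive_kernel = generate (free_Abelian_group UNIV) motive_relations"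

definition lattice_relation :: "'a::lattice \<Rightarrow> 'a \<Rightarrow> 'a \<Rightarrow>\<^sub>0 int" where
  "lattice_relation U V = frag_of U + frag_of V - frag_of (sup U V) - frag_of (inf U V)"

lemma subgroup_motive_kernel: "subgroup motive_kernel (free_Abelian_group UNIV)"
  unfolding motive_kernel_def by (rule group.generate_is_subgroup) auto

lemma motive_kernel_zero: "0 \<in> motive_kernel"
  using subgroup.one_closed[OF subgroup_motive_kernel] by simp

lemma motive_kernel_add: "x \<in> motive_kernel \<Longrightarrow> y \<in> motive_kernel \<Longrightarrow> x + y \<in> motive_kernel"
  using subgroup.m_closed[OF subgroup_motive_kernel] by fastforce

lemma motive_kernel_uminus: "x \<in> motive_kernel \<Longrightarrow> - x \<in> motive_kernel"
  using subgroup.m_inv_closed[OF subgroup_motive_kernel] by fastforce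

lemma motive_kernel_diff: "x \<in> motive_kernel \<Longrightarrow> y \<in> motive_kernel \<Longrightarrow> x - y \<in> motive_kernel"
  by (metis diff_conv_add_uminus motive_kernel_add motive_kernel_uminus)

lemma motive_kernel_cmul: "x \<in> motive_kernel \<Longrightarrow> frag_cmul c x \<in> motive_kernel"
  using group.subgroup_int_pow_closed[OF group_free_Abelian_group subgroup_motive_kernel] by simp

lemma motive_kernel_sum: "(\<And>i. i \<in> I \<Longrightarrow> f i \<in> motive_kernel) \<Longrightarrow> sum f I \<in> motive_kernel"
  by (induction I rule: infinite_finite_induct) (simp_all add: motive_kernel_zero motive_kernel_add)

lemma frag_of_bot_in_motive_kernel: "frag_of bot \<in> motive_kernel"
  unfolding motive_kernel_def motive_relations_def by (rule generate.incl) simp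

lemma lattice_relation_in_motive_kernel: "lattice_relation U V \<in> motive_kernel"
  unfolding motive_kernel_def motive_relations_def lattice_relation_def
  by (rule generate.incl) blast

lemma frag_cmul_diff_distrib2: "frag_cmul c (a - b) = frag_cmul c a - frag_cmul c b"
  by (rule poly_mapping_eqI) (simp add: lookup_minus algebra_simps)

text \<open>\<open>filter_eval G z\<close> is the sum of the coefficients of \<open>z\<close> at elements of \<open>G\<close>; it is computed
  through \<open>frag_extend\<close> into \<open>unit \<Rightarrow>\<^sub>0 int\<close> to inherit linearity.\<close>

definition filter_eval :: "'a set \<Rightarrow> ('a \<Rightarrow>\<^sub>0 int) \<Rightarrow> int" where
  "filter_eval G z = Poly_Mapping.lookup (frag_extend (\<lambda>d. if d \<in> G then frag_of () else 0) z) ()"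

lemma filter_eval_zero: "filter_eval G 0 = 0"
  by (simp add: filter_eval_def)

lemma filter_eval_add: "filter_eval G (x + y) = filter_eval G x + filter_eval G y"
  by (simp add: filter_eval_def frag_extend_add lookup_add)

lemma filter_eval_uminus: "filter_eval G (- x) = - filter_eval G x"
  by (simp add: filter_eval_def frag_extend_minus lookup_minus)

lemma filter_eval_diff: "filter_eval G (x - y) = filter_eval G x - filter_eval G y"
  by (simp add: filter_eval_def frag_extend_diff lookup_minus)

lemma filter_eval_cmul: "filter_eval G (frag_cmul c x) = c * filter_eval G x"
  by (simp add: filter_eval_def frag_extend_cmul)

lemma filter_eval_of: "filter_eval G (frag_of d) = (if d \<in> G then 1 else 0)"
  by (simp add: filter_eval_def)

lemma filter_eval_sum: "filter_eval G (sum f I) = (\<Sum>i\<in>I. filter_eval G (f i))"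
  by (induction I rule: infinite_finite_induct) (simp_all add: filter_eval_zero filter_eval_add)

lemma filter_eval_expansion:
  "filter_eval G z = (\<Sum>d\<in>Poly_Mapping.keys z. Poly_Mapping.lookup z d * (if d \<in> G then 1 else 0))"
  by (subst frag_expansion) (simp add: frag_extend_def filter_eval_sum filter_eval_cmul filter_eval_of)

lemma filter_eval_motive_relation:
  assumes "prime_filter G" "h \<in> motive_relations"
  shows "filter_eval G h = 0"
  using assms prime_filter_inf_iff[OF assms(1)] prime_filter_sup_iff[OF assms(1)]
  unfolding motive_relations_def
  by (auto simp: prime_filter_bot filter_eval_add filter_eval_diff filter_eval_of)

lemma filter_eval_motive_kernel:
  assumes "prime_filter G" "z \<in> motive_kernel"
  shows "filter_eval G z = 0"
  using assms(2) unfolding motive_kernel_def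
proof (induction z rule: generate.induct)
  case one
  then show ?case by (simp add: filter_eval_zero)
next
  case (incl h)
  then show ?case by (rule filter_eval_motive_relation[OF assms(1)])
next
  case (inv h)
  then show ?case by (simp add: filter_eval_uminus filter_eval_motive_relation[OF assms(1)])
next
  case (eng h1 h2)
  then show ?case by (simp add: filter_eval_add)
qed

section \<open>Elements vanishing at all prime filters are relations\<close>

text \<open>\<open>inf_of m A = m \<sqinter> \<Sqinter>A\<close>, which makes sense for \<open>A = {}\<close> although \<open>D\<close> has no top.\<close>

definition inf_of :: "'a::semilattice_inf \<Rightarrow> 'a set \<Rightarrow> 'a" where
  "inf_of m A = Inf_fin (insert m A)"

lemma inf_of_eq: "finite A \<Longrightarrow> inf_of m A = (if A = {} then m else inf m (Inf_fin A))"
  by (simp add: inf_of_def)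

lemma inf_of_inf: "finite A \<Longrightarrow> inf_of (inf m x) A = inf (inf_of m A) x"
  by (simp add: inf_of_eq inf_aci)

lemma inf_of_insert: "finite A \<Longrightarrow> inf_of m (insert x A) = inf (inf_of m A) x"
  by (cases "A = {}") (simp_all add: inf_of_eq inf_aci)

definition inf_of_diff :: "'a::lattice \<Rightarrow> 'a \<Rightarrow> 'a set \<Rightarrow> 'a \<Rightarrow>\<^sub>0 int" where
  "inf_of_diff m b T = frag_of (inf_of m T) - frag_of (inf_of (inf m b) T)"

lemma inf_of_diff_insert:
  fixes m b d :: "'a::distrib_lattice"
  assumes "finite T"
  shows "frag_cmul v (inf_of_diff m b T) + frag_cmul v' (inf_of_diff m b (insert d T))
       = frag_cmul v (inf_of_diff m (sup b d) T) + frag_cmul (v + v') (inf_of_diff (inf m d) b T)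
         - frag_cmul v (lattice_relation (inf_of (inf m b) T) (inf_of (inf m d) T))"
proof -
  define X where "X = inf_of m T"
  have mb: "inf_of (inf m b) T = inf X b" and md: "inf_of (inf m d) T = inf X d"
    and mdb: "inf_of (inf (inf m d) b) T = inf (inf X d) b"
    and m_ins: "inf_of m (insert d T) = inf X d"
    using assms unfolding X_def by (simp_all add: inf_of_inf inf_of_insert)
  have mb_ins: "inf_of (inf m b) (insert d T) = inf (inf X d) b"
    using assms by (simp only: inf_of_insert mb) (simp add: inf_aci)
  have m_bd: "inf_of (inf m (sup b d)) T = sup (inf X b) (inf X d)"
    unfolding X_def by (subst inf_of_inf[OF assms]) (rule inf_sup_distrib1)
  have "inf (inf X b) (inf X d) = inf (inf X d) b"
    by (simp add: inf_aci)
  then show ?thesis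
    unfolding inf_of_diff_def lattice_relation_def mb md mdb m_ins mb_ins m_bd
    by (intro poly_mapping_eqI) (simp add: lookup_add lookup_minus algebra_simps)
qed

lemma sum_Pow_insert_inf_of_diff:
  fixes m b d :: "'a::distrib_lattice"
  assumes "finite A" "d \<notin> A"
  shows "(\<Sum>T\<in>Pow (insert d A). frag_cmul (w T) (inf_of_diff m b T))
      = (\<Sum>T\<in>Pow A. frag_cmul (w T) (inf_of_diff m (sup b d) T))
        + (\<Sum>T\<in>Pow A. frag_cmul (w T + w (insert d T)) (inf_of_diff (inf m d) b T))
        - (\<Sum>T\<in>Pow A. frag_cmul (w T) (lattice_relation (inf_of (inf m b) T) (inf_of (inf m d) T)))"
proof -
  have "(\<Sum>T\<in>Pow (insert d A). frag_cmul (w T) (inf_of_diff m b T))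
      = (\<Sum>T\<in>Pow A. frag_cmul (w T) (inf_of_diff m b T)
          + frag_cmul (w (insert d T)) (inf_of_diff m b (insert d T)))"
    using assms by (simp add: sum_Pow_insert sum.distrib)
  also have "\<dots> = (\<Sum>T\<in>Pow A. frag_cmul (w T) (inf_of_diff m (sup b d) T)
        + frag_cmul (w T + w (insert d T)) (inf_of_diff (inf m d) b T)
        - frag_cmul (w T) (lattice_relation (inf_of (inf m b) T) (inf_of (inf m d) T)))"
    using assms(1) by (intro sum.cong refl inf_of_diff_insert) (auto intro: finite_subset)
  also have "\<dots> = (\<Sum>T\<in>Pow A. frag_cmul (w T) (inf_of_diff m (sup b d) T))
        + (\<Sum>T\<in>Pow A. frag_cmul (w T + w (insert d T)) (inf_of_diff (inf m d) b T))
        - (\<Sum>T\<in>Pow A. frag_cmul (w T) (lattice_relation (inf_of (inf m b) T) (inf_of (inf m d) T)))"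
    by (simp add: sum.distrib sum_subtractf)
  finally show ?thesis .
qed

lemma inf_of_diff_sum_in_motive_kernel:
  fixes m b :: "'a::{distrib_lattice,order_bot}"
  assumes "finite A"
    and "\<And>G. prime_filter G \<Longrightarrow> m \<in> G \<Longrightarrow> b \<notin> G \<Longrightarrow> (\<Sum>T\<in>Pow A. w T * subset_ind T G) = 0"
  shows "(\<Sum>T\<in>Pow A. frag_cmul (w T) (inf_of_diff m b T)) \<in> motive_kernel"
  using assms
proof (induction A arbitrary: m b w rule: finite_induct)
  case empty
  show ?case
  proof (cases "m \<le> b")
    case True
    then show ?thesis
      by (simp add: inf_of_diff_def inf_of_def inf_absorb1 motive_kernel_zero)
  next
    case False
    then obtain G where "prime_filter G" "m \<in> G" "b \<notin> G"
      by (rule prime_filter_separates)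
    then have "w {} = 0"
      using empty.prems[of G] by (simp add: subset_ind_def)
    then show ?thesis
      by (simp add: motive_kernel_zero)
  qed
next
  case (insert d A)
  \<comment> \<open>split the prime filters according to whether they contain d\<close>
  have "(\<Sum>T\<in>Pow A. frag_cmul (w T) (inf_of_diff m (sup b d) T)) \<in> motive_kernel"
  proof (rule insert.IH)
    fix G
    assume G: "prime_filter G" "m \<in> G" "sup b d \<notin> G"
    then have "b \<notin> G" "d \<notin> G"
      using prime_filter_sup_iff by blast+
    then show "(\<Sum>T\<in>Pow A. w T * subset_ind T G) = 0"
      using insert.prems[OF G(1,2)] insert.hyps by (simp add: sum_Pow_insert_subset_ind_nonmem)
  qed
  moreover have "(\<Sum>T\<in>Pow A. frag_cmul (w T + w (insert d T)) (inf_of_diff (inf m d) b T))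
      \<in> motive_kernel"
  proof (rule insert.IH)
    fix G
    assume G: "prime_filter G" "inf m d \<in> G" "b \<notin> G"
    then have "m \<in> G" "d \<in> G"
      using prime_filter_inf_iff by blast+
    then show "(\<Sum>T\<in>Pow A. (w T + w (insert d T)) * subset_ind T G) = 0"
      using insert.prems[OF G(1) _ G(3)] insert.hyps by (simp add: sum_Pow_insert_subset_ind_mem)
  qed
  moreover have "(\<Sum>T\<in>Pow A. frag_cmul (w T)
      (lattice_relation (inf_of (inf m b) T) (inf_of (inf m d) T))) \<in> motive_kernel"
    by (intro motive_kernel_sum motive_kernel_cmul lattice_relation_in_motive_kernel)
  ultimately show ?case
    unfolding sum_Pow_insert_inf_of_diff[OF insert.hyps] by (intro motive_kernel_add motive_kernel_diff)
qed

lemma motive_kernel_if_filter_evals_vanish: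
  fixes z :: "'a::{distrib_lattice,order_bot} \<Rightarrow>\<^sub>0 int"
  assumes "\<And>G. prime_filter G \<Longrightarrow> filter_eval G z = 0"
  shows "z \<in> motive_kernel"
proof (cases "z = 0")
  case True
  then show ?thesis
    by (simp add: motive_kernel_zero)
next
  case False
  define A where "A = Poly_Mapping.keys z"
  define w where "w T = (if is_singleton T then Poly_Mapping.lookup z (the_elem T) else 0)" for T
  have A: "finite A" "A \<noteq> {}"
    using False unfolding A_def by auto
  \<comment> \<open>m only has to bound the support from above, as \<open>D\<close> need not have a top\<close>
  have "(\<Sum>T\<in>Pow A. frag_cmul (w T) (inf_of_diff (Sup_fin A) bot T)) \<in> motive_kernel"
  proof (rule inf_of_diff_sum_in_motive_kernel[OF A(1)])
    fix G :: "'a set"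
    assume G: "prime_filter G"
    have "(\<Sum>T\<in>Pow A. w T * subset_ind T G) = (\<Sum>d\<in>A. Poly_Mapping.lookup z d * subset_ind {d} G)"
      using A(1) by (subst sum_Pow_singletons) (auto simp: w_def)
    also have "\<dots> = filter_eval G z"
      by (simp add: filter_eval_expansion A_def subset_ind_def)
    finally show "(\<Sum>T\<in>Pow A. w T * subset_ind T G) = 0"
      using assms[OF G] by simp
  qed
  moreover have "(\<Sum>T\<in>Pow A. frag_cmul (w T) (inf_of_diff (Sup_fin A) bot T))
      = z - (\<Sum>d\<in>A. frag_cmul (Poly_Mapping.lookup z d) (frag_of bot))"
  proof -
    have "inf_of_diff (Sup_fin A) bot {d} = frag_of d - frag_of bot" if "d \<in> A" for d
      using that A by (simp add: inf_of_diff_def inf_of_def inf_absorb1 inf_absorb2 Sup_fin.coboundedI)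
    then have "(\<Sum>T\<in>Pow A. frag_cmul (w T) (inf_of_diff (Sup_fin A) bot T))
        = (\<Sum>d\<in>A. frag_cmul (Poly_Mapping.lookup z d) (frag_of d - frag_of bot))"
      using A(1) by (subst sum_Pow_singletons) (auto simp: w_def)
    also have "\<dots> = z - (\<Sum>d\<in>A. frag_cmul (Poly_Mapping.lookup z d) (frag_of bot))"
      by (subst (2) frag_expansion) (simp add: frag_extend_def A_def frag_cmul_diff_distrib2 sum_subtractf)
    finally show ?thesis .
  qed
  moreover have "(\<Sum>d\<in>A. frag_cmul (Poly_Mapping.lookup z d) (frag_of bot)) \<in> motive_kernel"
    by (intro motive_kernel_sum motive_kernel_cmul frag_of_bot_in_motive_kernel)
  ultimately show ?thesis
    by (metis diff_add_cancel motive_kernel_add)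
qed

definition meet_frag :: "('b \<Rightarrow> 'a::semilattice_inf) \<Rightarrow> 'b set \<Rightarrow> 'a \<Rightarrow>\<^sub>0 int" where
  "meet_frag g T = frag_of (Inf_fin (g ` T))"

lemma filter_eval_meet_frag:
  assumes "prime_filter G" "finite T" "T \<noteq> {}" "T \<subseteq> J"
  shows "filter_eval G (meet_frag g T) = subset_ind T (J \<inter> g -` G)"
  using assms
  by (auto simp: meet_frag_def filter_eval_of prime_filter_Inf_fin_iff subset_ind_def)

lemma filter_eval_meet_frag_combination:
  assumes G: "prime_filter G" and J: "finite J" and U: "U \<subseteq> J" "U \<noteq> {}"
  shows "filter_eval G (frag_cmul k (meet_frag g U)
        - (\<Sum>T\<in>colex_below J U - {{}}. frag_cmul (d T) (meet_frag g T)))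
      = k * subset_ind U (J \<inter> g -` G)
        - (\<Sum>T\<in>colex_below J U - {{}}. d T * subset_ind T (J \<inter> g -` G))"
proof -
  have "filter_eval G (meet_frag g T) = subset_ind T (J \<inter> g -` G)"
    if "T \<in> colex_below J U - {{}}" for T
    using that J by (intro filter_eval_meet_frag[OF G]) (auto simp: colex_below_def intro: finite_subset)
  then show ?thesis
    using J U by (simp add: filter_eval_diff filter_eval_cmul filter_eval_sum
        filter_eval_meet_frag[OF G] finite_subset)
qed

text \<open>The empty set is included so that the empty meet, which has no counterpart in \<open>D\<close>,
  receives coefficient zero.\<close>

definition prime_traces :: "'b set \<Rightarrow> ('b \<Rightarrow> 'a::{distrib_lattice,order_bot}) \<Rightarrow> 'b set set" where
  "prime_traces J g = insert {} {J \<inter> g -` G | G. prime_filter G}"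

lemma spanned_below_of_motive_kernel:
  fixes g :: "'b::linorder \<Rightarrow> 'a::{distrib_lattice,order_bot}"
  assumes J: "finite J" and U: "U \<subseteq> J" "U \<noteq> {}"
    and nU: "frag_cmul n (meet_frag g U)
      - (\<Sum>T\<in>colex_below J U - {{}}. frag_cmul (c T) (meet_frag g T)) \<in> motive_kernel"
  shows "spanned_below J U (prime_traces J g) (\<lambda>S. n * subset_ind U S)"
  unfolding spanned_below_def
proof (intro exI ballI)
  fix S
  assume S: "S \<in> prime_traces J g"
  define c0 where "c0 T = (if T = {} then 0 else c T)" for T
  have "(\<Sum>T\<in>colex_below J U. c0 T * subset_ind T {}) = 0"
    by (rule sum.neutral) (simp add: c0_def subset_ind_def)
  then have "(\<Sum>T\<in>colex_below J U. c0 T * subset_ind T S)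
      = (\<Sum>T\<in>colex_below J U - {{}}. c T * subset_ind T S)"
    using sum_subset_ind_remove_empty[OF finite_colex_below[OF J], of c0 S] by (simp add: c0_def)
  also have "\<dots> = n * subset_ind U S"
  proof -
    consider "S = {}" | G where "prime_filter G" "S = J \<inter> g -` G"
      using S unfolding prime_traces_def by blast
    then show ?thesis
    proof cases
      case 1
      have "(\<Sum>T\<in>colex_below J U - {{}}. c T * subset_ind T {}) = 0"
        by (rule sum.neutral) (auto simp: subset_ind_def)
      with 1 U(2) show ?thesis
        by (simp add: subset_ind_def)
    next
      case 2
      then show ?thesis
        using filter_eval_motive_kernel[OF 2(1) nU] filter_eval_meet_frag_combination[OF 2(1) J U]
        by simp
    qed
  qed
  finally show "n * subset_ind U S = (\<Sum>T\<in>colex_below J U. c0 T * subset_ind T S)"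
    by simp
qed

lemma motive_kernel_of_spanned_below:
  fixes g :: "'b::linorder \<Rightarrow> 'a::{distrib_lattice,order_bot}"
  assumes J: "finite J" and U: "U \<subseteq> J" "U \<noteq> {}"
    and span: "spanned_below J U (prime_traces J g) (subset_ind U)"
  obtains c where "meet_frag g U
      - (\<Sum>T\<in>colex_below J U - {{}}. frag_cmul (c T) (meet_frag g T)) \<in> motive_kernel"
proof -
  obtain c where c: "\<And>S. S \<in> prime_traces J g \<Longrightarrow>
      subset_ind U S = (\<Sum>T\<in>colex_below J U. c T * subset_ind T S)"
    using span unfolding spanned_below_def by blast
  have "(\<Sum>T\<in>colex_below J U. c T * subset_ind T {}) = 0"
    using c[of "{}"] U(2) unfolding prime_traces_def by (simp add: subset_ind_def)
  then have "subset_ind U S = (\<Sum>T\<in>colex_below J U - {{}}. c T * subset_ind T S)"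
    if "S \<in> prime_traces J g" for S
    using c[OF that] sum_subset_ind_remove_empty[OF finite_colex_below[OF J], of c S] by simp
  then have "meet_frag g U - (\<Sum>T\<in>colex_below J U - {{}}. frag_cmul (c T) (meet_frag g T))
      \<in> motive_kernel"
    using filter_eval_meet_frag_combination[OF _ J U, of _ 1 g c] unfolding prime_traces_def
    by (intro motive_kernel_if_filter_evals_vanish) auto
  then show ?thesis
    using that by blast
qed

lemma motive_kernel_pure:
  fixes g :: "'b::linorder \<Rightarrow> 'a::{distrib_lattice,order_bot}"
  assumes J: "finite J" and U: "U \<subseteq> J" "U \<noteq> {}" and n: "n \<noteq> 0"
    and nU: "frag_cmul n (meet_frag g U)
      - (\<Sum>T\<in>colex_below J U - {{}}. frag_cmul (c T) (meet_frag g T)) \<in> motive_kernel"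
  obtains c' where "meet_frag g U
      - (\<Sum>T\<in>colex_below J U - {{}}. frag_cmul (c' T) (meet_frag g T)) \<in> motive_kernel"
proof -
  have "prime_traces J g \<subseteq> Pow J"
    unfolding prime_traces_def by auto
  then have "spanned_below J U (prime_traces J g) (subset_ind U)"
    using spanned_below_pure[OF J U(1) _ n spanned_below_of_motive_kernel[OF J U nU]] by blast
  then show ?thesis
    using motive_kernel_of_spanned_below[OF J U] that by blast
qed

section \<open>A basis of meets\<close>

definition reducible :: "'a::{distrib_lattice,order_bot} wellordered set \<Rightarrow> bool" where
  "reducible T \<longleftrightarrow> (\<exists>J c. finite J \<and> meet_frag Rep_wellordered T
      - (\<Sum>S\<in>colex_below J T - {{}}. frag_cmul (c S) (meet_frag Rep_wellordered S)) \<in> motive_kernel)"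

definition basic_set :: "'a::{distrib_lattice,order_bot} wellordered set \<Rightarrow> bool" where
  "basic_set T \<longleftrightarrow> finite T \<and> T \<noteq> {} \<and> \<not> reducible T"

definition in_basic_span :: "('a::{distrib_lattice,order_bot} \<Rightarrow>\<^sub>0 int) \<Rightarrow> bool" where
  "in_basic_span z \<longleftrightarrow> (\<exists>w. Poly_Mapping.keys w \<subseteq> Collect basic_set
      \<and> z - frag_extend (meet_frag Rep_wellordered) w \<in> motive_kernel)"

lemma in_basic_span_zero: "in_basic_span 0"
  unfolding in_basic_span_def by (rule exI[of _ 0]) (simp add: motive_kernel_zero)

lemma in_basic_span_add: "in_basic_span x \<Longrightarrow> in_basic_span y \<Longrightarrow> in_basic_span (x + y)"
  unfolding in_basic_span_def
proof (elim exE conjE)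
  fix w1 w2
  assume w: "Poly_Mapping.keys w1 \<subseteq> Collect basic_set" "Poly_Mapping.keys w2 \<subseteq> Collect basic_set"
    and x: "x - frag_extend (meet_frag Rep_wellordered) w1 \<in> motive_kernel"
    and y: "y - frag_extend (meet_frag Rep_wellordered) w2 \<in> motive_kernel"
  have "Poly_Mapping.keys (w1 + w2) \<subseteq> Collect basic_set"
    using w keys_add[of w1 w2] by blast
  moreover have "x + y - frag_extend (meet_frag Rep_wellordered) (w1 + w2)
      = (x - frag_extend (meet_frag Rep_wellordered) w1) + (y - frag_extend (meet_frag Rep_wellordered) w2)"
    by (simp add: frag_extend_add)
  ultimately show "\<exists>w. Poly_Mapping.keys w \<subseteq> Collect basic_set
      \<and> x + y - frag_extend (meet_frag Rep_wellordered) w \<in> motive_kernel"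
    using motive_kernel_add[OF x y] by metis
qed

lemma in_basic_span_cmul: "in_basic_span x \<Longrightarrow> in_basic_span (frag_cmul c x)"
  unfolding in_basic_span_def
proof (elim exE conjE)
  fix w
  assume w: "Poly_Mapping.keys w \<subseteq> Collect basic_set"
    and x: "x - frag_extend (meet_frag Rep_wellordered) w \<in> motive_kernel"
  have "Poly_Mapping.keys (frag_cmul c w) \<subseteq> Collect basic_set"
    using w keys_cmul[of c w] by blast
  moreover have "frag_cmul c x - frag_extend (meet_frag Rep_wellordered) (frag_cmul c w)
      = frag_cmul c (x - frag_extend (meet_frag Rep_wellordered) w)"
    by (simp add: frag_extend_cmul frag_cmul_diff_distrib2)
  ultimately show "\<exists>w. Poly_Mapping.keys w \<subseteq> Collect basic_set
      \<and> frag_cmul c x - frag_extend (meet_frag Rep_wellordered) w \<in> motive_kernel"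
    using motive_kernel_cmul[OF x] by metis
qed

lemma in_basic_span_sum: "(\<And>i. i \<in> I \<Longrightarrow> in_basic_span (f i)) \<Longrightarrow> in_basic_span (sum f I)"
  by (induction I rule: infinite_finite_induct) (simp_all add: in_basic_span_zero in_basic_span_add)

lemma in_basic_span_modulo_kernel:
  assumes "in_basic_span z" "z' - z \<in> motive_kernel"
  shows "in_basic_span z'"
proof -
  obtain w where "Poly_Mapping.keys w \<subseteq> Collect basic_set"
    "z - frag_extend (meet_frag Rep_wellordered) w \<in> motive_kernel"
    using assms(1) unfolding in_basic_span_def by blast
  moreover have "z' - frag_extend (meet_frag Rep_wellordered) w
      = (z' - z) + (z - frag_extend (meet_frag Rep_wellordered) w)"
    by simp
  ultimately show ?thesis
    unfolding in_basic_span_def using assms(2) by (metis motive_kernel_add)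
qed

lemma in_basic_span_meet_frag:
  fixes T :: "'a::{distrib_lattice,order_bot} wellordered set"
  shows "finite T \<Longrightarrow> T \<noteq> {} \<Longrightarrow> in_basic_span (meet_frag Rep_wellordered T)"
proof (induction T rule: wf_induct_rule[OF wf_colex_less])
  case (1 T)
  show ?case
  proof (cases "reducible T")
    case True
    then obtain J c where J: "finite J" and red: "meet_frag Rep_wellordered T
        - (\<Sum>S\<in>colex_below J T - {{}}. frag_cmul (c S) (meet_frag Rep_wellordered S)) \<in> motive_kernel"
      unfolding reducible_def by blast
    have "in_basic_span (\<Sum>S\<in>colex_below J T - {{}}. frag_cmul (c S) (meet_frag Rep_wellordered S))"
    proof (intro in_basic_span_sum in_basic_span_cmul)
      fix S
      assume "S \<in> colex_below J T - {{}}"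
      then show "in_basic_span (meet_frag Rep_wellordered S)"
        using J by (intro "1.IH") (auto simp: colex_below_def intro: finite_subset)
    qed
    then show ?thesis
      using red by (rule in_basic_span_modulo_kernel)
  next
    case False
    then have "basic_set T"
      using "1.prems" unfolding basic_set_def by blast
    then show ?thesis
      unfolding in_basic_span_def
      by (intro exI[of _ "frag_of T"]) (simp add: keys_frag_of motive_kernel_zero)
  qed
qed

lemma basic_sets_span:
  fixes z :: "'a::{distrib_lattice,order_bot} \<Rightarrow>\<^sub>0 int"
  shows "\<exists>w. Poly_Mapping.keys w \<subseteq> Collect basic_set
    \<and> z - frag_extend (meet_frag Rep_wellordered) w \<in> motive_kernel"
proof -
  have "in_basic_span (frag_of d)" for d :: 'a
    using in_basic_span_meet_frag[of "{Abs_wellordered d}"]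
    by (simp add: meet_frag_def Abs_wellordered_inverse)
  then have "in_basic_span (frag_extend frag_of z)"
    unfolding frag_extend_def by (intro in_basic_span_sum in_basic_span_cmul)
  then show ?thesis
    unfolding in_basic_span_def frag_expansion[symmetric] .
qed

lemma frag_extend_colex_greatest:
  fixes w :: "'b::linorder set \<Rightarrow>\<^sub>0 int"
  assumes J: "finite J" and U: "U \<in> Poly_Mapping.keys w"
    and below: "\<And>S. S \<in> Poly_Mapping.keys w \<Longrightarrow> S \<noteq> U \<Longrightarrow> S \<in> colex_below J U - {{}}"
  shows "frag_extend e w = frag_cmul (Poly_Mapping.lookup w U) (e U)
    - (\<Sum>S\<in>colex_below J U - {{}}. frag_cmul (- Poly_Mapping.lookup w S) (e S))"
proof -
  have "(\<Sum>S\<in>colex_below J U - {{}}. frag_cmul (- Poly_Mapping.lookup w S) (e S))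
      = (\<Sum>S\<in>Poly_Mapping.keys w - {U}. frag_cmul (- Poly_Mapping.lookup w S) (e S))"
  proof (rule sum.mono_neutral_right)
    show "finite (colex_below J U - {{}})"
      using J by (simp add: finite_colex_below)
    show "Poly_Mapping.keys w - {U} \<subseteq> colex_below J U - {{}}"
      using below by blast
    show "\<forall>S\<in>colex_below J U - {{}} - (Poly_Mapping.keys w - {U}).
        frag_cmul (- Poly_Mapping.lookup w S) (e S) = 0"
      by (auto simp: colex_below_def colex_less_irrefl in_keys_iff)
  qed
  then show ?thesis
    using U unfolding frag_extend_def by (simp add: sum.remove flip: sum_negf)
qed

lemma basic_sets_independent:
  fixes w :: "'a::{distrib_lattice,order_bot} wellordered set \<Rightarrow>\<^sub>0 int"
  assumes keys: "Poly_Mapping.keys w \<subseteq> Collect basic_set"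
    and kernel: "frag_extend (meet_frag Rep_wellordered) w \<in> motive_kernel"
  shows "w = 0"
proof (rule ccontr)
  assume "w \<noteq> 0"
  define K where "K = Poly_Mapping.keys w"
  have K: "finite K" "K \<noteq> {}" and basic: "\<And>T. T \<in> K \<Longrightarrow> basic_set T"
    using \<open>w \<noteq> 0\<close> keys unfolding K_def by auto
  then obtain U where U: "U \<in> K" and greatest: "\<And>S. S \<in> K \<Longrightarrow> S \<noteq> U \<Longrightarrow> colex_less S U"
    using colex_greatest[OF K] unfolding basic_set_def by blast
  define J where "J = \<Union>K"
  have J: "finite J" "U \<subseteq> J"
    using K(1) basic U unfolding J_def basic_set_def by auto
  have U_basic: "U \<noteq> {}" "\<not> reducible U"
    using basic[OF U] unfolding basic_set_def by auto
  have below: "S \<in> colex_below J U - {{}}" if "S \<in> K" "S \<noteq> U" for S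
    using that greatest basic unfolding colex_below_def J_def basic_set_def by auto
  have "frag_extend (meet_frag Rep_wellordered) w
      = frag_cmul (Poly_Mapping.lookup w U) (meet_frag Rep_wellordered U)
        - (\<Sum>S\<in>colex_below J U - {{}}.
            frag_cmul (- Poly_Mapping.lookup w S) (meet_frag Rep_wellordered S))"
    using frag_extend_colex_greatest[OF J(1) U[unfolded K_def] below[unfolded K_def]] .
  with kernel have kernel_U: "frag_cmul (Poly_Mapping.lookup w U) (meet_frag Rep_wellordered U)
      - (\<Sum>S\<in>colex_below J U - {{}}.
          frag_cmul (- Poly_Mapping.lookup w S) (meet_frag Rep_wellordered S)) \<in> motive_kernel"
    by simp
  have "Poly_Mapping.lookup w U \<noteq> 0"
    using U unfolding K_def by (simp add: in_keys_iff)
  then obtain c where "meet_frag Rep_wellordered U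
      - (\<Sum>S\<in>colex_below J U - {{}}. frag_cmul (c S) (meet_frag Rep_wellordered S)) \<in> motive_kernel"
    by (rule motive_kernel_pure[OF J U_basic(1) _ kernel_U])
  with J(1) have "reducible U"
    unfolding reducible_def by blast
  with U_basic(2) show False
    by contradiction
qed

section \<open>Quotients of free abelian groups\<close>

lemma rcos_eq_iff_diff_mem:
  assumes "subgroup H (free_Abelian_group UNIV)"
  shows "H #>\<^bsub>free_Abelian_group UNIV\<^esub> a = H #>\<^bsub>free_Abelian_group UNIV\<^esub> b \<longleftrightarrow> a - b \<in> H"
proof
  assume "H #>\<^bsub>free_Abelian_group UNIV\<^esub> a = H #>\<^bsub>free_Abelian_group UNIV\<^esub> b"
  moreover have "a \<in> H #>\<^bsub>free_Abelian_group UNIV\<^esub> a"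
    by (rule group.rcos_self) (simp_all add: assms)
  ultimately show "a - b \<in> H"
    using subgroup.rcos_module_imp[OF assms group_free_Abelian_group] by simp
next
  assume "a - b \<in> H"
  then have "a \<in> H #>\<^bsub>free_Abelian_group UNIV\<^esub> b"
    using subgroup.rcos_module_rev[OF assms group_free_Abelian_group] by simp
  then show "H #>\<^bsub>free_Abelian_group UNIV\<^esub> a = H #>\<^bsub>free_Abelian_group UNIV\<^esub> b"
    using group.repr_independence[OF group_free_Abelian_group _ _ assms] by simp
qed

lemma FactGroup_iso_free_Abelian_group:
  fixes H :: "('a \<Rightarrow>\<^sub>0 int) set" and e :: "'s \<Rightarrow> 'a \<Rightarrow>\<^sub>0 int"
  assumes H: "subgroup H (free_Abelian_group UNIV)"
    and span: "\<And>z. \<exists>w. Poly_Mapping.keys w \<subseteq> S \<and> z - frag_extend e w \<in> H"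
    and indep: "\<And>w. Poly_Mapping.keys w \<subseteq> S \<Longrightarrow> frag_extend e w \<in> H \<Longrightarrow> w = 0"
  shows "(\<lambda>w. H #>\<^bsub>free_Abelian_group UNIV\<^esub> frag_extend e w)
    \<in> iso (free_Abelian_group S) (free_Abelian_group UNIV Mod H)"
proof -
  interpret N: normal H "free_Abelian_group UNIV"
    using comm_group.subgroup_imp_normal[OF abelian_free_Abelian_group H] .
  note eq_iff = rcos_eq_iff_diff_mem[OF H]
  let ?\<phi> = "\<lambda>w. H #>\<^bsub>free_Abelian_group UNIV\<^esub> frag_extend e w"
  have hom: "?\<phi> \<in> hom (free_Abelian_group S) (free_Abelian_group UNIV Mod H)"
    by (rule homI) (auto simp: carrier_FactGroup N.rcos_sum frag_extend_add)
  have "inj_on ?\<phi> (carrier (free_Abelian_group S))"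
  proof (rule inj_onI)
    fix x y
    assume "x \<in> carrier (free_Abelian_group S)" "y \<in> carrier (free_Abelian_group S)" "?\<phi> x = ?\<phi> y"
    then have "Poly_Mapping.keys (x - y) \<subseteq> S" "frag_extend e (x - y) \<in> H"
      using keys_diff[of x y] by (auto simp: eq_iff frag_extend_diff)
    then show "x = y"
      using indep[of "x - y"] by simp
  qed
  moreover have "?\<phi> ` carrier (free_Abelian_group S) = carrier (free_Abelian_group UNIV Mod H)"
  proof
    show "?\<phi> ` carrier (free_Abelian_group S) \<subseteq> carrier (free_Abelian_group UNIV Mod H)"
      using hom by (rule hom_carrier)
  next
    show "carrier (free_Abelian_group UNIV Mod H) \<subseteq> ?\<phi> ` carrier (free_Abelian_group S)"
    proof
      fix X
      assume "X \<in> carrier (free_Abelian_group UNIV Mod H)"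
      then obtain z where z: "X = H #>\<^bsub>free_Abelian_group UNIV\<^esub> z"
        unfolding carrier_FactGroup by auto
      obtain w where w: "Poly_Mapping.keys w \<subseteq> S" "z - frag_extend e w \<in> H"
        using span by blast
      then have "X = ?\<phi> w"
        unfolding z by (simp add: eq_iff)
      with w(1) show "X \<in> ?\<phi> ` carrier (free_Abelian_group S)"
        by simp
    qed
  qed
  ultimately show ?thesis
    using hom unfolding iso_def bij_betw_def by blast
qed

lemma free_abelianI:
  assumes G: "comm_group G" and \<phi>: "\<phi> \<in> iso (free_Abelian_group S) G"
  shows "free_abelian G"
proof -
  define B where "B = (\<lambda>s. \<phi> (frag_of s)) ` S"
  have "B \<subseteq> carrier G"
    using \<phi> unfolding B_def iso_def hom_def by auto
  moreover have "inj_on (\<lambda>s. \<phi> (frag_of s)) S"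
  proof (rule inj_onI)
    fix x y
    assume "x \<in> S" "y \<in> S" "\<phi> (frag_of x) = \<phi> (frag_of y)"
    moreover have "inj_on \<phi> (carrier (free_Abelian_group S))"
      using \<phi> unfolding iso_def bij_betw_def by blast
    ultimately have "frag_of x = frag_of y"
      by (auto dest: inj_onD)
    then show "x = y"
      by (simp add: frag_of_eq)
  qed
  then have "free_Abelian_group S \<cong> free_Abelian_group B"
    unfolding B_def by (simp add: isomorphic_free_Abelian_groups eqpoll_sym inj_on_image_eqpoll_self)
  then have "G \<cong> free_Abelian_group B"
    using group.iso_sym[OF group_free_Abelian_group is_isoI[OF \<phi>]] iso_trans by blast
  ultimately show ?thesis
    unfolding free_abelian_def using G by blast
qed

theorem corollary3p37:
  shows "free_abelian (module_of_motives :: ('a::{distrib_lattice,order_bot} \<Rightarrow>\<^sub>0 int) set monoid)"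
proof -
  have M: "(module_of_motives :: ('a \<Rightarrow>\<^sub>0 int) set monoid) = free_Abelian_group UNIV Mod motive_kernel"
    unfolding module_of_motives_def motive_kernel_def ..
  have "comm_group (module_of_motives :: ('a \<Rightarrow>\<^sub>0 int) set monoid)"
    unfolding M by (rule comm_group.abelian_FactGroup[OF abelian_free_Abelian_group subgroup_motive_kernel])
  moreover have "(\<lambda>w. motive_kernel #>\<^bsub>free_Abelian_group UNIV\<^esub> frag_extend (meet_frag Rep_wellordered) w)
      \<in> iso (free_Abelian_group (Collect basic_set)) (module_of_motives :: ('a \<Rightarrow>\<^sub>0 int) set monoid)"
    unfolding M using subgroup_motive_kernel basic_sets_span basic_sets_independent
    by (rule FactGroup_iso_free_Abelian_group)
  ultimately show ?thesis
    by (rule free_abelianI)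
qed

end
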